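(* Let $\eta>0$, $C>0$, $\alpha>0$, and let $a_p:\mathbb R\to\mathbb R$ be a function with $|a_p(y)|\ge c|y|$ for $|y|\le1$ and some $c>0$. Let $R(x,t;y)$ be a kernel satisfying, for all $x,y\in\mathbb R$, $t\ge0$, \[ |R(x,t;y)|\le Ce^{-\eta(|x-y|+t)}+Ce^{-\eta t}\chi(x,y)\Big[1+\frac{1}{|a_p(y)|}\Big(\frac xy\Big)^{\alpha}\Big], \] where $\chi(x,y)=1$ if $-1<y<x<0$ or $0<x<y<1$ and $\chi(x,y)=0$ otherwise. Then there exists $C'>0$ such that for all $1\le p\le\infty$, $t\ge0$, \[ \Big|\int_{-\infty}^{+\infty}R(\cdot,t;y)f(y)\,dy\Big|_{L^p}\le C'e^{-\eta t}\big(|f|_{L^p}+|f|_{L^\infty}\big). \] *)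

theory Defs
  imports "HOL-Analysis.Analysis"
begin

definition chi :: "real \<Rightarrow> real \<Rightarrow> real" where
  "chi x y = (if (-1 < y \<and> y < x \<and> x < 0) \<or> (0 < x \<and> x < y \<and> y < 1) then 1 else 0)"

definition Linf_norm :: "(real \<Rightarrow> real) \<Rightarrow> ennreal" where
  "Linf_norm g = Inf {M. AE x in lborel. ennreal \<bar>g x\<bar> \<le> M}"

definition Lp_norm :: "ennreal \<Rightarrow> (real \<Rightarrow> real) \<Rightarrow> ennreal" where
  "Lp_norm p g =
     (if p = \<infinity> then Linf_norm g
      else (let r = enn2real p; I = (\<integral>\<^sup>+ x. ennreal (\<bar>g x\<bar> powr r) \<partial>lborel)
            in if I = \<infinity> then \<infinity> else ennreal ((enn2real I) powr (1 / r))))"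

end

theory Submission
  imports Defs "HOL-Real_Asymp.Real_Asymp"
begin

text \<open>
  For fixed t the kernel bound
  splits |R(x,t;y)| into exp(-eta t) C times a translation-invariant part exp(-eta |x-y|) and a
  singular part supported where chi(x,y) = 1.  Given f with |f| <= m almost everywhere, this yields
  the pointwise estimate

    |Tf(x)| <= exp(-eta t) C (exp_conv f x + m B indicator(-1,1) x),     B = 1 + 1/(c alpha),

  where exp_conv f is the convolution of |f| with exp(-eta |.|).  The singular part is dominated by
  the explicit majorant sing_kernel, whose y-integral is at most B and vanishes for |x| >= 1; this
  uses |a_p(y)| >= c|y| and integrates y^(-1-alpha) exactly.  The convolution part is bounded in
  L^infinity by (2/eta) m and in L^r by (2/eta) |f|_r, the latter via Jensen's inequality for the
  kernel (derived from Young's inequality for products) and Tonelli.  Both summands of the pointwise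
  estimate are then bounded in the given L^p norm, which gives the claim with
  C' = 4 (2/eta + 2 B) C.
\<close>

lemma Linf_norm_le:
  assumes "AE x in lborel. ennreal \<bar>g x\<bar> \<le> M"
  shows "Linf_norm g \<le> M"
  unfolding Linf_norm_def using assms by (intro Inf_lower) auto

lemma Linf_norm_AE_bound:
  assumes "Linf_norm f = ennreal l" "l \<ge> 0"
  shows "AE x in lborel. \<bar>f x\<bar> \<le> l"
proof -
  have approx: "AE x in lborel. ennreal \<bar>f x\<bar> \<le> ennreal (l + 1 / Suc n)" for n
  proof -
    have "Inf {M. AE x in lborel. ennreal \<bar>f x\<bar> \<le> M} < ennreal (l + 1 / Suc n)"
      using assms unfolding Linf_norm_def by (simp add: ennreal_less_iff)
    then obtain M where "AE x in lborel. ennreal \<bar>f x\<bar> \<le> M" "M < ennreal (l + 1 / Suc n)"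
      by (auto simp: Inf_less_iff)
    then show ?thesis by (auto elim: AE_mp)
  qed
  have "AE x in lborel. \<forall>n. ennreal \<bar>f x\<bar> \<le> ennreal (l + 1 / Suc n)"
    using approx by (simp add: AE_all_countable)
  then show ?thesis
  proof (rule AE_mp, intro AE_I2 impI)
    fix x assume le: "\<forall>n. ennreal \<bar>f x\<bar> \<le> ennreal (l + 1 / Suc n)"
    show "\<bar>f x\<bar> \<le> l"
    proof (rule field_le_epsilon)
      fix e :: real assume "e > 0"
      then obtain n where "1 / Suc n < e" using nat_approx_posE by blast
      moreover have "\<bar>f x\<bar> \<le> l + 1 / Suc n"
      proof -
        have "0 \<le> l + 1 / Suc n" using assms(2) by simp
        then show ?thesis using le[rule_format, of n] by (simp only: ennreal_le_iff)
      qed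
      ultimately show "\<bar>f x\<bar> \<le> l + e" by linarith
    qed
  qed
qed

lemma Lp_norm_finite_exponent:
  assumes "r \<ge> 1"
  shows "Lp_norm (ennreal r) g =
    (if (\<integral>\<^sup>+x. ennreal (\<bar>g x\<bar> powr r) \<partial>lborel) = \<infinity> then \<infinity>
     else ennreal (enn2real (\<integral>\<^sup>+x. ennreal (\<bar>g x\<bar> powr r) \<partial>lborel) powr (1 / r)))"
  using assms by (simp add: Lp_norm_def Let_def)

lemma Lp_norm_finiteE:
  assumes "r \<ge> 1" "Lp_norm (ennreal r) g \<noteq> \<infinity>"
  obtains F where "F \<ge> 0" "(\<integral>\<^sup>+x. ennreal (\<bar>g x\<bar> powr r) \<partial>lborel) = ennreal F"
    "Lp_norm (ennreal r) g = ennreal (F powr (1 / r))"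
proof -
  let ?I = "\<integral>\<^sup>+x. ennreal (\<bar>g x\<bar> powr r) \<partial>lborel"
  have "?I \<noteq> \<infinity>" using assms by (auto simp: Lp_norm_finite_exponent)
  then show ?thesis
    using that assms(1) by (cases ?I) (auto simp: Lp_norm_finite_exponent)
qed

lemma Lp_norm_le_root:
  assumes "r \<ge> 1" "T \<ge> 0" "(\<integral>\<^sup>+x. ennreal (\<bar>g x\<bar> powr r) \<partial>lborel) \<le> ennreal T"
  shows "Lp_norm (ennreal r) g \<le> ennreal (T powr (1 / r))"
proof -
  let ?I = "\<integral>\<^sup>+x. ennreal (\<bar>g x\<bar> powr r) \<partial>lborel"
  obtain I where I: "?I = ennreal I" "I \<ge> 0"
    using assms(3) by (cases ?I) (auto simp: top_unique)
  have "I \<le> T"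
    using assms(2,3) I by (simp add: ennreal_le_iff)
  then have "I powr (1 / r) \<le> T powr (1 / r)"
    using I assms(1) by (intro powr_mono2) auto
  then show ?thesis
    using I assms(1) by (simp add: Lp_norm_finite_exponent ennreal_leI)
qed

lemma exp_half_line_integral:
  assumes "\<eta> > (0::real)"
  shows "(\<integral>\<^sup>+z. ennreal (exp (- \<eta> * z)) * indicator {0..} z \<partial>lborel) = ennreal (1 / \<eta>)"
proof -
  have "(\<integral>\<^sup>+z. ennreal (exp (- \<eta> * z)) * indicator {0..} z \<partial>lborel)
      = ennreal (0 - (- exp (- \<eta> * 0) / \<eta>))"
  proof (rule nn_integral_FTC_atLeast)
    show "(\<lambda>z. exp (- \<eta> * z)) \<in> borel_measurable borel" by measurable
    show "\<And>z. 0 \<le> z \<Longrightarrow> ((\<lambda>z. - exp (- \<eta> * z) / \<eta>) has_real_derivative exp (- \<eta> * z)) (at z)"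
      using assms by (auto intro!: derivative_eq_intros simp: field_simps)
    show "((\<lambda>z. - exp (- \<eta> * z) / \<eta>) \<longlongrightarrow> 0) at_top"
      using assms by real_asymp
  qed simp
  then show ?thesis by simp
qed

lemma exp_kernel_integral:
  assumes "\<eta> > (0::real)"
  shows "(\<integral>\<^sup>+y. ennreal (exp (- \<eta> * \<bar>x - y\<bar>)) \<partial>lborel) \<le> ennreal (2 / \<eta>)"
proof -
  let ?half = "\<lambda>z. ennreal (exp (- \<eta> * z)) * indicator {0..} z"
  have "(\<integral>\<^sup>+y. ennreal (exp (- \<eta> * \<bar>x - y\<bar>)) \<partial>lborel)
      = (\<integral>\<^sup>+z. ennreal (exp (- \<eta> * \<bar>z\<bar>)) \<partial>lborel)"
    using nn_integral_real_affine[of "\<lambda>y. ennreal (exp (- \<eta> * \<bar>x - y\<bar>))" 1 x] by simp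
  also have "\<dots> \<le> (\<integral>\<^sup>+z. ?half z + ?half (0 + -1 * z) \<partial>lborel)"
    by (intro nn_integral_mono) (auto split: split_indicator)
  also have "\<dots> = (\<integral>\<^sup>+z. ?half z \<partial>lborel) + (\<integral>\<^sup>+z. ?half (0 + -1 * z) \<partial>lborel)"
    by (subst nn_integral_add) auto
  also have "(\<integral>\<^sup>+z. ?half (0 + -1 * z) \<partial>lborel) = (\<integral>\<^sup>+z. ?half z \<partial>lborel)"
    using nn_integral_real_affine[of ?half "-1" 0] by simp
  also have "(\<integral>\<^sup>+z. ?half z \<partial>lborel) = ennreal (1 / \<eta>)"
    using exp_half_line_integral[OF assms] .
  finally show ?thesis
    using assms by (simp flip: ennreal_plus)
qed

lemma exp_kernel_fubini:
  fixes g :: "real \<Rightarrow> ennreal"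
  assumes "\<eta> > 0" and [measurable]: "g \<in> borel_measurable borel"
  shows "(\<integral>\<^sup>+x. \<integral>\<^sup>+y. ennreal (exp (- \<eta> * \<bar>x - y\<bar>)) * g y \<partial>lborel \<partial>lborel)
           \<le> ennreal (2 / \<eta>) * (\<integral>\<^sup>+y. g y \<partial>lborel)"
proof -
  have "(\<integral>\<^sup>+x. \<integral>\<^sup>+y. ennreal (exp (- \<eta> * \<bar>x - y\<bar>)) * g y \<partial>lborel \<partial>lborel)
      = (\<integral>\<^sup>+y. (\<integral>\<^sup>+x. ennreal (exp (- \<eta> * \<bar>y - x\<bar>)) \<partial>lborel) * g y \<partial>lborel)"
    by (subst lborel_pair.Fubini') (auto simp: nn_integral_multc abs_minus_commute)
  also have "\<dots> \<le> (\<integral>\<^sup>+y. ennreal (2 / \<eta>) * g y \<partial>lborel)"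
    using exp_kernel_integral[OF assms(1)] by (intro nn_integral_mono mult_right_mono) auto
  also have "\<dots> = ennreal (2 / \<eta>) * (\<integral>\<^sup>+y. g y \<partial>lborel)"
    by (rule nn_integral_cmult) measurable
  finally show ?thesis .
qed

lemma young_tangent:
  fixes s L r :: real
  assumes "s \<ge> 0" "L > 0" "r \<ge> 1"
  shows "s * L powr (1 / r) \<le> L / r * s powr r + (r - 1) / r"
proof (cases "s = 0")
  case True then show ?thesis using assms by simp
next
  case False
  then have s: "s > 0" using assms by simp
  have "(L * s powr r) powr (1 / r) * 1 powr (1 - 1 / r) \<le> (1 / r) * (L * s powr r) + (1 - 1 / r) * 1"
    using assms s by (intro Youngs_inequality_0) (auto simp: field_simps)
  moreover have "(L * s powr r) powr (1 / r) = L powr (1 / r) * s"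
    using assms s by (simp add: powr_mult powr_powr)
  ultimately show ?thesis using assms by (simp add: field_simps)
qed

lemma kernel_young_integral:
  fixes k f :: "real \<Rightarrow> real"
  assumes r: "r \<ge> 1" and L: "L > 0"
    and [measurable]: "k \<in> borel_measurable borel" "f \<in> borel_measurable borel"
    and k0: "\<And>y. 0 \<le> k y" and kK: "(\<integral>\<^sup>+y. ennreal (k y) \<partial>lborel) \<le> ennreal K"
  shows "(\<integral>\<^sup>+y. ennreal (k y * \<bar>f y\<bar>) \<partial>lborel) * ennreal (L powr (1 / r))
           \<le> ennreal (L / r) * (\<integral>\<^sup>+y. ennreal (k y * \<bar>f y\<bar> powr r) \<partial>lborel)
             + ennreal ((r - 1) / r) * ennreal K"
proof -
  have "(\<integral>\<^sup>+y. ennreal (k y * \<bar>f y\<bar>) \<partial>lborel) * ennreal (L powr (1 / r))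
      = (\<integral>\<^sup>+y. ennreal (k y * \<bar>f y\<bar>) * ennreal (L powr (1 / r)) \<partial>lborel)"
    by (rule nn_integral_multc[symmetric]) measurable
  also have "\<dots> \<le> (\<integral>\<^sup>+y. ennreal (L / r) * ennreal (k y * \<bar>f y\<bar> powr r)
                          + ennreal ((r - 1) / r) * ennreal (k y) \<partial>lborel)"
  proof (intro nn_integral_mono)
    fix y
    have "k y * (\<bar>f y\<bar> * L powr (1 / r)) \<le> k y * (L / r * \<bar>f y\<bar> powr r + (r - 1) / r)"
      using young_tangent[of "\<bar>f y\<bar>" L r] L r k0[of y] by (intro mult_left_mono) auto
    then have "k y * \<bar>f y\<bar> * L powr (1 / r) \<le> L / r * (k y * \<bar>f y\<bar> powr r) + (r - 1) / r * k y"
      by (simp add: algebra_simps)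
    then show "ennreal (k y * \<bar>f y\<bar>) * ennreal (L powr (1 / r))
        \<le> ennreal (L / r) * ennreal (k y * \<bar>f y\<bar> powr r) + ennreal ((r - 1) / r) * ennreal (k y)"
      using L r k0[of y]
      by (simp add: ennreal_mult[symmetric] ennreal_plus[symmetric] ennreal_leI del: ennreal_plus)
  qed
  also have "\<dots> = ennreal (L / r) * (\<integral>\<^sup>+y. ennreal (k y * \<bar>f y\<bar> powr r) \<partial>lborel)
                  + ennreal ((r - 1) / r) * (\<integral>\<^sup>+y. ennreal (k y) \<partial>lborel)"
    by (subst nn_integral_add) (auto simp: nn_integral_cmult)
  also have "\<dots> \<le> ennreal (L / r) * (\<integral>\<^sup>+y. ennreal (k y * \<bar>f y\<bar> powr r) \<partial>lborel)
                  + ennreal ((r - 1) / r) * ennreal K"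
    by (intro add_mono mult_left_mono kK) auto
  finally show ?thesis .
qed

text \<open>It follows from the previous lemma with
  the optimal scale L = K / (integral of k |f|^r).\<close>
lemma kernel_jensen:
  fixes k f :: "real \<Rightarrow> real"
  assumes r: "r \<ge> 1" and [measurable]: "k \<in> borel_measurable borel" "f \<in> borel_measurable borel"
    and k0: "\<And>y. 0 \<le> k y" and kK: "(\<integral>\<^sup>+y. ennreal (k y) \<partial>lborel) \<le> ennreal K" and K: "K > 0"
    and h: "(\<integral>\<^sup>+y. ennreal (k y * \<bar>f y\<bar>) \<partial>lborel) = ennreal h" "h \<ge> 0"
  shows "ennreal (h powr r) \<le> ennreal (K powr (r - 1)) * (\<integral>\<^sup>+y. ennreal (k y * \<bar>f y\<bar> powr r) \<partial>lborel)"
proof -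
  let ?A = "\<integral>\<^sup>+y. ennreal (k y * \<bar>f y\<bar> powr r) \<partial>lborel"
  consider "?A = \<infinity>" | "?A = 0" | A where "?A = ennreal A" "A > 0"
    by (cases ?A) (auto simp: less_le)
  then show ?thesis
  proof cases
    case 1
    then show ?thesis using K by (simp add: ennreal_mult_top)
  next
    case 2
    then have "AE y in lborel. ennreal (k y * \<bar>f y\<bar> powr r) = 0"
      by (subst nn_integral_0_iff_AE[symmetric]) auto
    then have "AE y in lborel. ennreal (k y * \<bar>f y\<bar>) = 0"
      by (rule AE_mp) (use k0 in \<open>auto intro!: AE_I2 simp: zero_ennreal_def[symmetric]\<close>)
    then have "h = 0"
      using h by (simp add: nn_integral_0_iff_AE[symmetric])
    then show ?thesis using r by simp
  next
    case 3
    define L where "L = K / A"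
    have L: "L > 0" using 3 K by (simp add: L_def)
    have "ennreal (h * L powr (1 / r)) \<le> ennreal (L / r) * ennreal A + ennreal ((r - 1) / r) * ennreal K"
      using kernel_young_integral[OF r L assms(2,3) k0 kK] 3 h by (simp add: ennreal_mult)
    also have "\<dots> = ennreal (L / r * A + (r - 1) / r * K)"
      using L r 3 K by (simp add: ennreal_mult[symmetric] ennreal_plus[symmetric] del: ennreal_plus)
    also have "L / r * A + (r - 1) / r * K = K"
      using 3 r by (simp add: L_def field_simps)
    finally have "h \<le> K / L powr (1 / r)"
      using K L by (simp add: ennreal_le_iff field_simps)
    then have "h powr r \<le> (K / L powr (1 / r)) powr r"
      using h r by (intro powr_mono2) auto
    also have "\<dots> = K powr r / L"
      using L K r by (simp add: powr_divide powr_powr)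
    also have "\<dots> = K powr (r - 1) * A"
      using K 3 by (simp add: L_def powr_diff field_simps)
    finally show ?thesis
      using 3 K by (simp add: ennreal_mult[symmetric] ennreal_leI)
  qed
qed

definition exp_conv :: "real \<Rightarrow> (real \<Rightarrow> real) \<Rightarrow> real \<Rightarrow> real" where
  "exp_conv \<eta> f x = enn2real (\<integral>\<^sup>+y. ennreal (exp (- \<eta> * \<bar>x - y\<bar>) * \<bar>f y\<bar>) \<partial>lborel)"

lemma exp_conv_nonneg: "0 \<le> exp_conv \<eta> f x"
  by (simp add: exp_conv_def)

lemma exp_conv_measurable [measurable]:
  assumes [measurable]: "f \<in> borel_measurable borel"
  shows "exp_conv \<eta> f \<in> borel_measurable borel"
  unfolding exp_conv_def by measurable

lemma exp_conv_nn_integral_le: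
  assumes "\<eta> > 0" and [measurable]: "f \<in> borel_measurable borel"
    and "m \<ge> 0" and f_bound: "AE y in lborel. \<bar>f y\<bar> \<le> m"
  shows "(\<integral>\<^sup>+y. ennreal (exp (- \<eta> * \<bar>x - y\<bar>) * \<bar>f y\<bar>) \<partial>lborel) \<le> ennreal (2 / \<eta> * m)"
proof -
  have "(\<integral>\<^sup>+y. ennreal (exp (- \<eta> * \<bar>x - y\<bar>) * \<bar>f y\<bar>) \<partial>lborel)
      \<le> (\<integral>\<^sup>+y. ennreal (exp (- \<eta> * \<bar>x - y\<bar>)) * ennreal m \<partial>lborel)"
    using f_bound
    by (intro nn_integral_mono_AE) (auto elim!: AE_mp simp: ennreal_mult[symmetric] ennreal_leI)
  also have "\<dots> = (\<integral>\<^sup>+y. ennreal (exp (- \<eta> * \<bar>x - y\<bar>)) \<partial>lborel) * ennreal m"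
    by (rule nn_integral_multc) measurable
  also have "\<dots> \<le> ennreal (2 / \<eta>) * ennreal m"
    using exp_kernel_integral[OF assms(1)] by (intro mult_right_mono) auto
  also have "\<dots> = ennreal (2 / \<eta> * m)"
    using assms(1,3) by (intro ennreal_mult[symmetric]) auto
  finally show ?thesis .
qed

lemma exp_conv_eq:
  assumes "\<eta> > 0" "f \<in> borel_measurable borel" "m \<ge> 0" "AE y in lborel. \<bar>f y\<bar> \<le> m"
  shows "(\<integral>\<^sup>+y. ennreal (exp (- \<eta> * \<bar>x - y\<bar>) * \<bar>f y\<bar>) \<partial>lborel) = ennreal (exp_conv \<eta> f x)"
  using exp_conv_nn_integral_le[OF assms, of x] unfolding exp_conv_def
  by (cases "\<integral>\<^sup>+y. ennreal (exp (- \<eta> * \<bar>x - y\<bar>) * \<bar>f y\<bar>) \<partial>lborel") (auto simp: top_unique)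

lemma exp_conv_le_sup:
  assumes "\<eta> > 0" "f \<in> borel_measurable borel" "m \<ge> 0" "AE y in lborel. \<bar>f y\<bar> \<le> m"
  shows "exp_conv \<eta> f x \<le> 2 / \<eta> * m"
proof -
  have "ennreal (exp_conv \<eta> f x) \<le> ennreal (2 / \<eta> * m)"
    using exp_conv_nn_integral_le[OF assms, of x] by (simp only: exp_conv_eq[OF assms])
  then show ?thesis
    using assms(1,3) by (subst (asm) ennreal_le_iff) auto
qed

text \<open>The L^r bound for the convolution: pointwise Jensen followed by Tonelli.\<close>
lemma exp_conv_Lr:
  assumes "\<eta> > 0" "r \<ge> 1" and [measurable]: "f \<in> borel_measurable borel"
    and "m \<ge> 0" "AE y in lborel. \<bar>f y\<bar> \<le> m"
  shows "(\<integral>\<^sup>+x. ennreal (exp_conv \<eta> f x powr r) \<partial>lborel)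
           \<le> ennreal ((2 / \<eta>) powr r) * (\<integral>\<^sup>+y. ennreal (\<bar>f y\<bar> powr r) \<partial>lborel)"
proof -
  define K where "K = 2 / \<eta>"
  have K: "K > 0" using assms(1) by (simp add: K_def)
  let ?k = "\<lambda>x y. exp (- \<eta> * \<bar>x - y\<bar>)"
  have "ennreal (exp_conv \<eta> f x powr r)
          \<le> ennreal (K powr (r - 1)) * (\<integral>\<^sup>+y. ennreal (?k x y) * ennreal (\<bar>f y\<bar> powr r) \<partial>lborel)" for x
    using kernel_jensen[OF assms(2), of "?k x" f K] exp_kernel_integral[OF assms(1), of x]
      exp_conv_eq[OF assms(1,3-5), of x] exp_conv_nonneg[of \<eta> f x] K
    by (simp add: K_def ennreal_mult[symmetric])
  then have "(\<integral>\<^sup>+x. ennreal (exp_conv \<eta> f x powr r) \<partial>lborel)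
      \<le> (\<integral>\<^sup>+x. ennreal (K powr (r - 1)) *
             (\<integral>\<^sup>+y. ennreal (?k x y) * ennreal (\<bar>f y\<bar> powr r) \<partial>lborel) \<partial>lborel)"
    by (intro nn_integral_mono)
  also have "\<dots> = ennreal (K powr (r - 1)) *
      (\<integral>\<^sup>+x. \<integral>\<^sup>+y. ennreal (?k x y) * ennreal (\<bar>f y\<bar> powr r) \<partial>lborel \<partial>lborel)"
    by (rule nn_integral_cmult) measurable
  also have "\<dots> \<le> ennreal (K powr (r - 1)) * (ennreal K * (\<integral>\<^sup>+y. ennreal (\<bar>f y\<bar> powr r) \<partial>lborel))"
    using exp_kernel_fubini[OF assms(1), of "\<lambda>y. ennreal (\<bar>f y\<bar> powr r)"]
    by (intro mult_left_mono) (auto simp: K_def)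
  also have "\<dots> = ennreal (K powr r) * (\<integral>\<^sup>+y. ennreal (\<bar>f y\<bar> powr r) \<partial>lborel)"
    using K powr_add[of K "r - 1" 1] by (simp add: ennreal_mult mult.assoc)
  finally show ?thesis by (simp add: K_def)
qed

text \<open>An integrable majorant of the singular part chi(x,y) (1 + (x/y)^alpha / |a(y)|) of the
  kernel, for |a(y)| >= c |y|: it uses 1/|a(y)| <= 1/(c |y|) and is supported on the segment between x
  and sign(x) = +1 or -1.\<close>
definition sing_kernel :: "real \<Rightarrow> real \<Rightarrow> real \<Rightarrow> real \<Rightarrow> real" where
  "sing_kernel c \<alpha> x y =
     (if 0 < x \<and> x < 1 then indicator {x..1} y * (1 + x powr \<alpha> / c * y powr (-1 - \<alpha>))
      else if -1 < x \<and> x < 0 then indicator {-1..x} y * (1 + (-x) powr \<alpha> / c * (-y) powr (-1 - \<alpha>))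
      else 0)"

lemma sing_kernel_nonneg: "c > 0 \<Longrightarrow> 0 \<le> sing_kernel c \<alpha> x y"
  unfolding sing_kernel_def by (auto split: split_indicator)

lemma sing_kernel_measurable [measurable]: "sing_kernel c \<alpha> x \<in> borel_measurable borel"
  unfolding sing_kernel_def by measurable

text \<open>The majorant is symmetric under x, y |-> -x, -y; this reduces x < 0 to x > 0.\<close>
lemma sing_kernel_reflect: "sing_kernel c \<alpha> (-x) (-y) = sing_kernel c \<alpha> x y"
  unfolding sing_kernel_def by (auto split: split_indicator)

lemma singular_factor_le:
  fixes x y c ay \<alpha> :: real
  assumes "0 < x" "0 < y" "c > 0" "ay \<ge> c * y"
  shows "1 / ay * (x / y) powr \<alpha> \<le> x powr \<alpha> / c * y powr (-1 - \<alpha>)"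
proof -
  have "y powr (-1 - \<alpha>) = inverse (y powr (1 + \<alpha>))"
    using powr_minus[of y "1 + \<alpha>"] by (simp add: algebra_simps)
  then have y_pow: "y powr (-1 - \<alpha>) = inverse (y * y powr \<alpha>)"
    using assms(2) by (simp add: powr_add)
  have "0 < c * y" using assms by simp
  moreover have "0 < ay" using assms \<open>0 < c * y\<close> by linarith
  ultimately have "1 / ay \<le> 1 / (c * y)"
    using assms(4) by (intro divide_left_mono) auto
  then have "1 / ay * (x / y) powr \<alpha> \<le> 1 / (c * y) * (x / y) powr \<alpha>"
    by (intro mult_right_mono) auto
  also have "\<dots> = x powr \<alpha> / c * y powr (-1 - \<alpha>)"
    using assms by (simp add: y_pow powr_divide field_simps)
  finally show ?thesis .
qed

lemma chi_term_le_sing_kernel: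
  assumes "c > 0" and a_low: "\<And>y. \<bar>y\<bar> \<le> 1 \<Longrightarrow> \<bar>a y\<bar> \<ge> c * \<bar>y\<bar>"
  shows "chi x y * (1 + (1 / \<bar>a y\<bar>) * (x / y) powr \<alpha>) \<le> sing_kernel c \<alpha> x y"
proof (cases "(-1 < y \<and> y < x \<and> x < 0) \<or> (0 < x \<and> x < y \<and> y < 1)")
  case False
  then have "chi x y = 0" by (simp add: chi_def)
  then show ?thesis using sing_kernel_nonneg[OF assms(1)] by simp
next
  case True
  then show ?thesis
  proof
    assume xy: "-1 < y \<and> y < x \<and> x < 0"
    have "\<bar>a y\<bar> \<ge> c * (-y)" using a_low[of y] xy by auto
    from singular_factor_le[OF _ _ assms(1) this, of "-x" \<alpha>] xy
    show ?thesis by (auto simp: chi_def sing_kernel_def)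
  next
    assume xy: "0 < x \<and> x < y \<and> y < 1"
    have "\<bar>a y\<bar> \<ge> c * y" using a_low[of y] xy by auto
    from singular_factor_le[OF _ _ assms(1) this, of x \<alpha>] xy
    show ?thesis by (auto simp: chi_def sing_kernel_def)
  qed
qed

lemma sing_kernel_integral_pos:
  assumes "c > 0" "\<alpha> > 0" "0 < x" "x < 1"
  shows "(\<integral>\<^sup>+y. ennreal (sing_kernel c \<alpha> x y) \<partial>lborel) \<le> ennreal (1 + 1 / (c * \<alpha>))"
proof -
  let ?f = "\<lambda>y. 1 + x powr \<alpha> / c * y powr (-1 - \<alpha>)"
  let ?F = "\<lambda>y. y - x powr \<alpha> / (c * \<alpha>) * y powr (-\<alpha>)"
  have "(\<integral>\<^sup>+y. ennreal (sing_kernel c \<alpha> x y) \<partial>lborel)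
      = (\<integral>\<^sup>+y. ennreal (?f y) * indicator {x..1} y \<partial>lborel)"
    using assms by (intro nn_integral_cong) (auto simp: sing_kernel_def split: split_indicator)
  also have "\<dots> = ennreal (?F 1 - ?F x)"
  proof (rule nn_integral_FTC_Icc)
    fix y assume "y \<in> {x..1}"
    then have "y > 0" using assms by auto
    have exponent: "-\<alpha> - 1 = -1 - \<alpha>" by simp
    show "(?F has_real_derivative ?f y) (at y)"
      using \<open>y > 0\<close> assms by (auto intro!: derivative_eq_intros simp: field_simps exponent)
  qed (use assms in auto)
  also have "?F 1 - ?F x = 1 - x + 1 / (c * \<alpha>) - x powr \<alpha> / (c * \<alpha>)"
    using assms by (simp add: field_simps powr_add[symmetric])
  also have "\<dots> \<le> 1 + 1 / (c * \<alpha>)"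
  proof -
    have "0 \<le> x powr \<alpha> / (c * \<alpha>)" using assms by simp
    then show ?thesis using assms by linarith
  qed
  finally show ?thesis by (simp add: ennreal_leI)
qed

lemma sing_kernel_integral:
  assumes "c > 0" "\<alpha> > 0"
  shows "(\<integral>\<^sup>+y. ennreal (sing_kernel c \<alpha> x y) \<partial>lborel)
           \<le> ennreal ((1 + 1 / (c * \<alpha>)) * indicator {-1<..<1} x)"
proof -
  consider "0 < x \<and> x < 1" | "-1 < x \<and> x < 0" | "\<not> (0 < x \<and> x < 1) \<and> \<not> (-1 < x \<and> x < 0)"
    by linarith
  then show ?thesis
  proof cases
    case 1
    then show ?thesis using sing_kernel_integral_pos[OF assms] by simp
  next
    case 2
    have "(\<integral>\<^sup>+y. ennreal (sing_kernel c \<alpha> x y) \<partial>lborel)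
        = (\<integral>\<^sup>+y. ennreal (sing_kernel c \<alpha> (-x) y) \<partial>lborel)"
      using nn_integral_real_affine[of "\<lambda>y. ennreal (sing_kernel c \<alpha> (-x) y)" "-1" 0]
      by (simp add: sing_kernel_reflect)
    also have "\<dots> \<le> ennreal (1 + 1 / (c * \<alpha>))"
      using sing_kernel_integral_pos[OF assms, of "-x"] 2 by simp
    finally show ?thesis using 2 by simp
  next
    case 3
    then have "sing_kernel c \<alpha> x y = 0" for y by (auto simp: sing_kernel_def)
    then show ?thesis by simp
  qed
qed

lemma kernel_integrand_le:
  assumes "C > 0" "c > 0" and a_low: "\<And>y. \<bar>y\<bar> \<le> 1 \<Longrightarrow> \<bar>a y\<bar> \<ge> c * \<bar>y\<bar>"
    and k_bound: "\<bar>k\<bar> \<le> C * exp (- \<eta> * (\<bar>x - y\<bar> + t))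
                   + C * exp (- \<eta> * t) * chi x y * (1 + (1 / \<bar>a y\<bar>) * (x / y) powr \<alpha>)"
    and fy: "\<bar>v\<bar> \<le> m"
  shows "\<bar>k * v\<bar> \<le> exp (- \<eta> * t) * C * (exp (- \<eta> * \<bar>x - y\<bar>) * \<bar>v\<bar>)
                    + exp (- \<eta> * t) * C * m * sing_kernel c \<alpha> x y"
proof -
  let ?E = "exp (- \<eta> * t)"
  let ?Q = "chi x y * (1 + (1 / \<bar>a y\<bar>) * (x / y) powr \<alpha>)"
  have split_exp: "exp (- \<eta> * (\<bar>x - y\<bar> + t)) = exp (- \<eta> * \<bar>x - y\<bar>) * ?E"
    by (simp add: algebra_simps flip: exp_add)
  have "\<bar>k * v\<bar> \<le> (C * exp (- \<eta> * (\<bar>x - y\<bar> + t)) + C * ?E * ?Q) * \<bar>v\<bar>"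
    using k_bound by (simp add: abs_mult mult_right_mono mult.assoc)
  also have "\<dots> = ?E * C * (exp (- \<eta> * \<bar>x - y\<bar>) * \<bar>v\<bar>) + ?E * C * (?Q * \<bar>v\<bar>)"
    unfolding split_exp by (simp add: algebra_simps)
  also have "?Q * \<bar>v\<bar> \<le> sing_kernel c \<alpha> x y * m"
    using chi_term_le_sing_kernel[OF assms(2) a_low] sing_kernel_nonneg[OF assms(2)] fy
    by (intro mult_mono) auto
  finally show ?thesis
    using assms(1) by (simp add: mult_left_mono algebra_simps)
qed

lemma kernel_operator_pointwise:
  fixes k :: "real \<Rightarrow> real \<Rightarrow> real"
  assumes "\<eta> > 0" "C > 0" "\<alpha> > 0" "c > 0"
    and a_low: "\<And>y. \<bar>y\<bar> \<le> 1 \<Longrightarrow> \<bar>a y\<bar> \<ge> c * \<bar>y\<bar>"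
    and k_bound: "\<And>x y. \<bar>k x y\<bar> \<le> C * exp (- \<eta> * (\<bar>x - y\<bar> + t))
                   + C * exp (- \<eta> * t) * chi x y * (1 + (1 / \<bar>a y\<bar>) * (x / y) powr \<alpha>)"
    and [measurable]: "f \<in> borel_measurable borel"
    and "m \<ge> 0" and f_bound: "AE y in lborel. \<bar>f y\<bar> \<le> m"
  shows "\<bar>\<integral>y. k x y * f y \<partial>lborel\<bar>
           \<le> exp (- \<eta> * t) * C * exp_conv \<eta> f x
             + exp (- \<eta> * t) * C * m * (1 + 1 / (c * \<alpha>)) * indicator {-1<..<1} x"
proof -
  let ?E = "exp (- \<eta> * t)" and ?B = "1 + 1 / (c * \<alpha>)"
  have B: "?B \<ge> 0" using assms(3,4) by (simp add: add_nonneg_nonneg)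
  have "ennreal \<bar>\<integral>y. k x y * f y \<partial>lborel\<bar> \<le> (\<integral>\<^sup>+y. ennreal \<bar>k x y * f y\<bar> \<partial>lborel)"
    by (cases "integrable lborel (\<lambda>y. k x y * f y)")
       (auto dest: integral_norm_bound_ennreal simp: not_integrable_integral_eq)
  also have "\<dots> \<le> (\<integral>\<^sup>+y. ennreal (?E * C) * ennreal (exp (- \<eta> * \<bar>x - y\<bar>) * \<bar>f y\<bar>)
                         + ennreal (?E * C * m) * ennreal (sing_kernel c \<alpha> x y) \<partial>lborel)"
    using f_bound
  proof (intro nn_integral_mono_AE, elim AE_mp, intro AE_I2 impI)
    fix y assume "\<bar>f y\<bar> \<le> m"
    from kernel_integrand_le[OF assms(2,4) a_low k_bound this]
    show "ennreal \<bar>k x y * f y\<bar> \<le> ennreal (?E * C) * ennreal (exp (- \<eta> * \<bar>x - y\<bar>) * \<bar>f y\<bar>)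
                         + ennreal (?E * C * m) * ennreal (sing_kernel c \<alpha> x y)"
      using assms(2,4) \<open>m \<ge> 0\<close> sing_kernel_nonneg[OF assms(4), of \<alpha> x y]
      by (simp add: ennreal_mult[symmetric] ennreal_plus[symmetric] ennreal_leI del: ennreal_plus)
  qed
  also have "\<dots> = ennreal (?E * C) * (\<integral>\<^sup>+y. ennreal (exp (- \<eta> * \<bar>x - y\<bar>) * \<bar>f y\<bar>) \<partial>lborel)
                  + ennreal (?E * C * m) * (\<integral>\<^sup>+y. ennreal (sing_kernel c \<alpha> x y) \<partial>lborel)"
    by (subst nn_integral_add) (auto simp: nn_integral_cmult)
  also have "\<dots> \<le> ennreal (?E * C) * ennreal (exp_conv \<eta> f x)
                  + ennreal (?E * C * m) * ennreal (?B * indicator {-1<..<1} x)"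
    using exp_conv_eq[OF assms(1,7-9), of x] sing_kernel_integral[OF assms(4,3), of x]
    by (intro add_mono mult_left_mono) auto
  also have "\<dots> = ennreal (?E * C * exp_conv \<eta> f x + ?E * C * m * ?B * indicator {-1<..<1} x)"
    using assms(2) \<open>m \<ge> 0\<close> B exp_conv_nonneg[of \<eta> f x]
    by (simp add: ennreal_mult[symmetric] ennreal_plus[symmetric] mult.assoc del: ennreal_plus)
  finally show ?thesis
    using assms(2) \<open>m \<ge> 0\<close> B exp_conv_nonneg[of \<eta> f x]
    by (subst (asm) ennreal_le_iff) auto
qed

lemma Linf_norm_two_part:
  fixes g u :: "real \<Rightarrow> real"
  assumes "\<And>x. \<bar>g x\<bar> \<le> u x + b * indicator {-1<..<1} x" "\<And>x. u x \<le> U" "b \<ge> 0"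
  shows "Linf_norm g \<le> ennreal (U + b)"
proof -
  have "\<bar>g x\<bar> \<le> U + b" for x
  proof -
    have "b * indicator {-1<..<1} x \<le> b"
      using assms(3) by (simp split: split_indicator)
    then show ?thesis
      using assms(1,2)[of x] by linarith
  qed
  then show ?thesis
    by (intro Linf_norm_le AE_I2 ennreal_leI)
qed

lemma sum_powr:
  fixes u v r :: real
  assumes "u \<ge> 0" "v \<ge> 0" "r > 0"
  shows "(u + v) powr r \<le> 2 powr r * (u powr r + v powr r)"
proof -
  have "(u + v) powr r \<le> (2 * max u v) powr r"
    using assms by (intro powr_mono2) auto
  also have "\<dots> = 2 powr r * max u v powr r"
    using assms by (simp add: powr_mult)
  also have "max u v powr r \<le> u powr r + v powr r"
    by (cases "u \<le> v") (auto simp: max_def)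
  then have "2 powr r * max u v powr r \<le> 2 powr r * (u powr r + v powr r)"
    by (intro mult_left_mono) auto
  finally show ?thesis .
qed

lemma nn_integral_plus_indicator:
  fixes F :: "real \<Rightarrow> ennreal"
  assumes [measurable]: "F \<in> borel_measurable borel"
  shows "(\<integral>\<^sup>+x. c * (F x + d * indicator {-1<..<1} x) \<partial>lborel) = c * ((\<integral>\<^sup>+x. F x \<partial>lborel) + d * 2)"
  by (simp add: nn_integral_cmult nn_integral_add nn_integral_cmult_indicator)

lemma Lr_integral_two_part:
  fixes g v :: "real \<Rightarrow> real"
  assumes r: "r \<ge> 1" and pw: "\<And>x. \<bar>g x\<bar> \<le> s * v x + b * indicator {-1<..<1} x"
    and "s \<ge> 0" "b \<ge> 0" "\<And>x. v x \<ge> 0" and [measurable]: "v \<in> borel_measurable borel"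
  shows "(\<integral>\<^sup>+x. ennreal (\<bar>g x\<bar> powr r) \<partial>lborel)
           \<le> ennreal (2 powr r) * (ennreal (s powr r) * (\<integral>\<^sup>+x. ennreal (v x powr r) \<partial>lborel)
                                   + ennreal (2 * b powr r))"
proof -
  have pw_r: "\<bar>g x\<bar> powr r \<le> 2 powr r * (s powr r * v x powr r + b powr r * indicator {-1<..<1} x)" for x
  proof -
    have "\<bar>g x\<bar> powr r \<le> (s * v x + b * indicator {-1<..<1} x) powr r"
      using pw[of x] r by (intro powr_mono2) auto
    also have "\<dots> \<le> 2 powr r * ((s * v x) powr r + (b * indicator {-1<..<1} x) powr r)"
      using assms r by (intro sum_powr) auto
    also have "(b * indicator {-1<..<1} x) powr r = b powr r * indicator {-1<..<1} x"
      using r by (simp split: split_indicator)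
    also have "(s * v x) powr r = s powr r * v x powr r"
      by (rule powr_mult)
    finally show ?thesis .
  qed
  let ?w = "\<lambda>x. ennreal (s powr r) * ennreal (v x powr r) + ennreal (b powr r) * indicator {-1<..<1} x"
  have "(\<integral>\<^sup>+x. ennreal (\<bar>g x\<bar> powr r) \<partial>lborel) \<le> (\<integral>\<^sup>+x. ennreal (2 powr r) * ?w x \<partial>lborel)"
  proof (intro nn_integral_mono)
    fix x
    have "ennreal (\<bar>g x\<bar> powr r)
        \<le> ennreal (2 powr r * (s powr r * v x powr r + b powr r * indicator {-1<..<1} x))"
      using pw_r by (rule ennreal_leI)
    also have "\<dots> = ennreal (2 powr r) * ?w x"
      by (cases "x \<in> {-1<..<1}") (simp_all add: ennreal_mult)
    finally show "ennreal (\<bar>g x\<bar> powr r) \<le> ennreal (2 powr r) * ?w x" .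
  qed
  also have "\<dots> = ennreal (2 powr r) * ((\<integral>\<^sup>+x. ennreal (s powr r) * ennreal (v x powr r) \<partial>lborel)
                                   + ennreal (b powr r) * 2)"
    by (rule nn_integral_plus_indicator) measurable
  also have "(\<integral>\<^sup>+x. ennreal (s powr r) * ennreal (v x powr r) \<partial>lborel)
      = ennreal (s powr r) * (\<integral>\<^sup>+x. ennreal (v x powr r) \<partial>lborel)"
    by (rule nn_integral_cmult) measurable
  also have "ennreal (b powr r) * 2 = ennreal (2 * b powr r)"
    by (simp add: ennreal_mult mult.commute)
  finally show ?thesis .
qed

lemma Lp_norm_two_part:
  fixes g v :: "real \<Rightarrow> real"
  assumes r: "r \<ge> 1" and pw: "\<And>x. \<bar>g x\<bar> \<le> s * v x + b * indicator {-1<..<1} x"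
    and "s \<ge> 0" "b \<ge> 0" "\<And>x. v x \<ge> 0" "v \<in> borel_measurable borel"
    and V: "(\<integral>\<^sup>+x. ennreal (v x powr r) \<partial>lborel) \<le> ennreal V" "V \<ge> 0"
  shows "Lp_norm (ennreal r) g \<le> ennreal (4 * (s * V powr (1 / r) + 2 * b))"
proof -
  define T where "T = 2 powr r * (s powr r * V + 2 * b powr r)"
  have "(\<integral>\<^sup>+x. ennreal (\<bar>g x\<bar> powr r) \<partial>lborel)
      \<le> ennreal (2 powr r) * (ennreal (s powr r) * (\<integral>\<^sup>+x. ennreal (v x powr r) \<partial>lborel)
                               + ennreal (2 * b powr r))"
    by (rule Lr_integral_two_part[OF assms(1-6)])
  also have "\<dots> \<le> ennreal (2 powr r) * (ennreal (s powr r) * ennreal V + ennreal (2 * b powr r))"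
    using V(1) by (intro mult_left_mono add_mono) auto
  also have "\<dots> = ennreal T"
    using V(2) by (simp add: T_def ennreal_mult[symmetric] ennreal_plus[symmetric] del: ennreal_plus)
  finally have Lp_T: "Lp_norm (ennreal r) g \<le> ennreal (T powr (1 / r))"
    using r V assms(3,4) by (intro Lp_norm_le_root) (auto simp: T_def)
  have "T powr (1 / r) \<le> 4 * (s * V powr (1 / r) + 2 * b)"
  proof -
    have root_T: "T powr (1 / r) = 2 * (s powr r * V + 2 * b powr r) powr (1 / r)"
      using r V assms(3,4) by (simp add: T_def powr_mult powr_powr)
    have root_1: "(s powr r * V) powr (1 / r) = s * V powr (1 / r)"
      using r V assms(3) by (simp add: powr_mult powr_powr)
    have root_2: "(2 * b powr r) powr (1 / r) = 2 powr (1 / r) * b"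
      using r assms(4) by (simp add: powr_mult powr_powr)
    have two: "2 powr (1 / r) \<le> (2::real)"
      using powr_mono[of "1 / r" 1 2] r by simp
    have "(s powr r * V + 2 * b powr r) powr (1 / r)
        \<le> 2 powr (1 / r) * (s * V powr (1 / r) + 2 powr (1 / r) * b)"
      using sum_powr[of "s powr r * V" "2 * b powr r" "1 / r"] r V assms(3,4)
      by (simp add: root_1 root_2)
    also have "\<dots> \<le> 2 * (s * V powr (1 / r) + 2 * b)"
      using two V assms(3,4) by (intro mult_mono add_mono) auto
    finally show ?thesis
      unfolding root_T by simp
  qed
  then have "ennreal (T powr (1 / r)) \<le> ennreal (4 * (s * V powr (1 / r) + 2 * b))"
    by (rule ennreal_leI)
  with Lp_T show ?thesis
    by (rule order_trans)
qed

lemma dominated_operator_Linf: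
  fixes f g :: "real \<Rightarrow> real"
  assumes "\<eta> > 0" "f \<in> borel_measurable borel" "Linf_norm f = ennreal m" "m \<ge> 0" "s \<ge> 0" "B \<ge> 0"
    and pw: "\<And>x. \<bar>g x\<bar> \<le> s * exp_conv \<eta> f x + s * m * B * indicator {-1<..<1} x"
  shows "Linf_norm g \<le> ennreal (4 * (2 / \<eta> + 2 * B) * s) * (Linf_norm f + Linf_norm f)"
proof -
  define K where "K = 2 / \<eta>"
  have K: "K > 0" using assms(1) by (simp add: K_def)
  have "exp_conv \<eta> f x \<le> K * m" for x
    using exp_conv_le_sup[OF assms(1,2,4) Linf_norm_AE_bound[OF assms(3,4)]] by (simp add: K_def)
  then have "s * exp_conv \<eta> f x \<le> s * (K * m)" for x
    using assms(5) by (intro mult_left_mono)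
  then have "Linf_norm g \<le> ennreal (s * (K * m) + s * m * B)"
    using pw assms(4-6) by (intro Linf_norm_two_part) auto
  also have "\<dots> \<le> ennreal (4 * (K + 2 * B) * s * (m + m))"
  proof (intro ennreal_leI)
    have "0 \<le> s * m * (7 * K + 15 * B)" using assms(4-6) K by simp
    then show "s * (K * m) + s * m * B \<le> 4 * (K + 2 * B) * s * (m + m)"
      by (simp add: algebra_simps)
  qed
  also have "\<dots> = ennreal (4 * (K + 2 * B) * s) * ennreal (m + m)"
    using assms(4-6) K by (intro ennreal_mult) auto
  also have "ennreal (m + m) = Linf_norm f + Linf_norm f"
    using assms(3,4) by (simp only: ennreal_plus)
  finally show ?thesis by (simp only: K_def)
qed

lemma dominated_operator_Lr:
  fixes f g :: "real \<Rightarrow> real"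
  assumes "\<eta> > 0" "r \<ge> 1" and [measurable]: "f \<in> borel_measurable borel"
    and "Linf_norm f = ennreal m" "m \<ge> 0" "s \<ge> 0" "B \<ge> 0" "Lp_norm (ennreal r) f \<noteq> \<infinity>"
    and pw: "\<And>x. \<bar>g x\<bar> \<le> s * exp_conv \<eta> f x + s * m * B * indicator {-1<..<1} x"
  shows "Lp_norm (ennreal r) g \<le> ennreal (4 * (2 / \<eta> + 2 * B) * s) * (Lp_norm (ennreal r) f + Linf_norm f)"
proof -
  define K where "K = 2 / \<eta>"
  have K: "K > 0" using assms(1) by (simp add: K_def)
  obtain F where F: "F \<ge> 0" "(\<integral>\<^sup>+x. ennreal (\<bar>f x\<bar> powr r) \<partial>lborel) = ennreal F"
      "Lp_norm (ennreal r) f = ennreal (F powr (1 / r))"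
    using Lp_norm_finiteE[OF assms(2,8)] .
  have "(\<integral>\<^sup>+x. ennreal (exp_conv \<eta> f x powr r) \<partial>lborel) \<le> ennreal (K powr r * F)"
    using exp_conv_Lr[OF assms(1-3,5) Linf_norm_AE_bound[OF assms(4,5)]] F(1,2)
    by (simp add: K_def ennreal_mult)
  from Lp_norm_two_part[OF assms(2) pw _ _ exp_conv_nonneg exp_conv_measurable[OF assms(3)] this]
  have Lp_g: "Lp_norm (ennreal r) g \<le> ennreal (4 * (s * (K powr r * F) powr (1 / r) + 2 * (s * m * B)))"
    using assms(5-7) K F(1) by simp
  have "(K powr r * F) powr (1 / r) = K * F powr (1 / r)"
    using K F(1) assms(2) by (simp add: powr_mult powr_powr)
  moreover have "0 \<le> s * (K * m + 2 * B * F powr (1 / r))"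
    using assms(5-7) K by simp
  ultimately have "4 * (s * (K powr r * F) powr (1 / r) + 2 * (s * m * B))
      \<le> 4 * (K + 2 * B) * s * (F powr (1 / r) + m)"
    by (simp add: algebra_simps)
  from order_trans[OF Lp_g ennreal_leI[OF this]]
  have "Lp_norm (ennreal r) g \<le> ennreal (4 * (K + 2 * B) * s) * ennreal (F powr (1 / r) + m)"
    using assms(5-7) K by (subst (asm) ennreal_mult) auto
  also have "ennreal (F powr (1 / r) + m) = Lp_norm (ennreal r) f + Linf_norm f"
    using F(3) assms(4,5) by (simp add: ennreal_plus)
  finally show ?thesis by (simp only: K_def)
qed

lemma dominated_operator_bound:
  fixes f g :: "real \<Rightarrow> real" and p :: ennreal
  assumes "\<eta> > 0" "p \<ge> 1" "f \<in> borel_measurable borel"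
    and "Linf_norm f = ennreal m" "m \<ge> 0" "s \<ge> 0" "B \<ge> 0" "Lp_norm p f \<noteq> \<infinity>"
    and "\<And>x. \<bar>g x\<bar> \<le> s * exp_conv \<eta> f x + s * m * B * indicator {-1<..<1} x"
  shows "Lp_norm p g \<le> ennreal (4 * (2 / \<eta> + 2 * B) * s) * (Lp_norm p f + Linf_norm f)"
proof (cases p)
  case (real r)
  then have "r \<ge> 1" using assms(2) by (metis ennreal_1 ennreal_le_iff)
  then show ?thesis
    using dominated_operator_Lr[OF assms(1) _ assms(3-7)] assms(8,9) real by simp
next
  case top
  then show ?thesis
    using dominated_operator_Linf[OF assms(1,3-7,9)] by (simp add: Lp_norm_def)
qed

theorem lemma4p4:
  fixes \<eta> C \<alpha> c :: real
    and a :: "real \<Rightarrow> real"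
    and R :: "real \<Rightarrow> real \<Rightarrow> real \<Rightarrow> real"
  assumes "\<eta> > 0" "C > 0" "\<alpha> > 0" "c > 0"
    and a_low: "\<And>y. \<bar>y\<bar> \<le> 1 \<Longrightarrow> \<bar>a y\<bar> \<ge> c * \<bar>y\<bar>"
    and R_meas: "\<And>t. t \<ge> 0 \<Longrightarrow> (\<lambda>(x, y). R x t y) \<in> borel_measurable (lborel \<Otimes>\<^sub>M lborel)"
    and R_bound: "\<And>x t y. t \<ge> 0 \<Longrightarrow>
        \<bar>R x t y\<bar> \<le> C * exp (- \<eta> * (\<bar>x - y\<bar> + t))
                   + C * exp (- \<eta> * t) * chi x y * (1 + (1 / \<bar>a y\<bar>) * (x / y) powr \<alpha>)"
  shows "\<exists>C'>0. \<forall>p::ennreal. p \<ge> 1 \<longrightarrow> (\<forall>t\<ge>0. \<forall>f \<in> borel_measurable lborel.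
           Lp_norm p (\<lambda>x. \<integral>y. R x t y * f y \<partial>lborel)
             \<le> ennreal (C' * exp (- \<eta> * t)) * (Lp_norm p f + Linf_norm f))"
proof -
  define B C' where "B = 1 + 1 / (c * \<alpha>)" and "C' = 4 * (2 / \<eta> + 2 * B) * C"
  have B: "B > 0" using assms(3,4) by (simp add: B_def add_pos_nonneg)
  have C': "C' > 0"
    unfolding C'_def using assms(1,2) B by (intro mult_pos_pos add_pos_pos) simp_all
  have "Lp_norm p (\<lambda>x. \<integral>y. R x t y * f y \<partial>lborel)
          \<le> ennreal (C' * exp (- \<eta> * t)) * (Lp_norm p f + Linf_norm f)"
    if "p \<ge> 1" "t \<ge> 0" and f_meas: "f \<in> borel_measurable borel" for p t f
  proof (cases "Lp_norm p f + Linf_norm f = \<infinity>")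
    case True
    have "ennreal (C' * exp (- \<eta> * t)) * (Lp_norm p f + Linf_norm f) = \<infinity>"
      unfolding True using C' by (simp add: ennreal_mult_top)
    then show ?thesis by simp
  next
    case False
    then obtain m where m: "Linf_norm f = ennreal m" "m \<ge> 0"
      by (cases "Linf_norm f") auto
    have "\<bar>\<integral>y. R x t y * f y \<partial>lborel\<bar>
        \<le> (exp (- \<eta> * t) * C) * exp_conv \<eta> f x + (exp (- \<eta> * t) * C) * m * B * indicator {-1<..<1} x" for x
      using kernel_operator_pointwise[OF assms(1-4) a_low R_bound[OF that(2)] f_meas m(2)
          Linf_norm_AE_bound[OF m]]
      by (simp add: B_def)
    from dominated_operator_bound[OF assms(1) that(1) f_meas m _ B[THEN less_imp_le] _ this]
    show ?thesis
      using False assms(2) by (simp add: C'_def mult_ac)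
  qed
  then show ?thesis
    using C' by auto
qed

end
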